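(* Let $(q(\ell))_{\ell\in\mathbb{Z}}\subset\mathbb{C}$ and $(p(\ell,z))_{(\ell,z)\in\mathbb{Z}^2}\subset\mathbb{C}$ satisfy $q(\ell)=0$ for all $\ell<0$ and $p(\ell,z)=0$ for all $\ell\in\mathbb{Z}$, $z<0$. Let $r$, $\mathbb{L}$, $\ddot r$, $\ddot p_+$, $q|_{\mathbb{L}}$ and $\beta\{\ddot p_+\}$ be as in the context. Then $$q|_{\mathbb{L}}(\ell)=\sum_{z\in\mathbb{Z}}\ddot r(\ell-z)\,\beta\{\ddot p_+\}(\ell,z)\qquad(\ell\in\mathbb{Z}).$$ In particular, $q|_{\mathbb{L}}(\ell)=q(\ell)$ for all $\ell\in\mathbb{Z}$ whenever $q(\ell)=0$ for all $\ell\in\mathbb{Z}\setminus\mathbb{L}$.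
   Context: Define $r(\ell):=\sum_{z\in\mathbb{Z}}q(\ell-z)p(\ell,z)$ for $\ell\in\mathbb{Z}$ (a finite sum). Let $L_0:=\sup\{L\in\mathbb{N}_0: p(\ell,0)\neq0 \text{ for all } 0\le\ell<L\}\in\mathbb{N}_0\cup\{\infty\}$; it is assumed that $L_0\ge1$. Put $\mathbb{L}:=\{\ell\in\mathbb{Z}:0\le\ell<L_0\}$. Define $\ddot r(\ell):=\frac{r(\ell)}{p(\ell,0)}\mathbf 1_{\mathbb{L}}(\ell)$, $\ddot p_+(\ell,z):=\big(\delta_{z,0}-\frac{p(\ell,z)}{p(\ell,0)}\big)\mathbf 1_{\mathbb{L}}(\ell)$ (with $\delta_{z,0}=1$ if $z=0$ and $0$ otherwise; both quantities are $0$ for $\ell\notin\mathbb{L}$), and $q|_{\mathbb{L}}(\ell):=q(\ell)\mathbf 1_{\mathbb{L}}(\ell)$. Convolution powers of the double sequence $\ddot p_+$: $\ddot p_+^{*0}(\ell,z):=\delta_{z,0}$ and $\ddot p_+^{*j}(\ell,z):=\sum_{z_1\in\mathbb{Z}}\ddot p_+(\ell,z_1)\,\ddot p_+^{*(j-1)}(\ell-z_1,z-z_1)$ for $j\ge1$ (finite sums). Set $\beta\{\ddot p_+\}(\ell,z):=\sum_{j=0}^{\lfloor z\rfloor}\ddot p_+^{*j}(\ell,z)$ for $(\ell,z)\in\mathbb{Z}^2$ (empty sums are $0$, so this is $0$ for $z<0$). *)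

theory Defs
  imports Complex_Main "HOL-Library.Groups_Big_Fun" "HOL-Library.Extended_Nat"
begin

text \<open>Sums over \<int> are finitely supported sums (Sum_any: sum over the support,
  which is finite in all uses below).\<close>

definition r_seq :: "(int \<Rightarrow> complex) \<Rightarrow> (int \<Rightarrow> int \<Rightarrow> complex) \<Rightarrow> int \<Rightarrow> complex" where
  "r_seq q p l = Sum_any (\<lambda>z. q (l - z) * p l z)"

definition L0 :: "(int \<Rightarrow> int \<Rightarrow> complex) \<Rightarrow> enat" where
  "L0 p = Sup {enat L | L. \<forall>l. 0 \<le> l \<and> l < int L \<longrightarrow> p l 0 \<noteq> 0}"

definition LL :: "(int \<Rightarrow> int \<Rightarrow> complex) \<Rightarrow> int set" where
  "LL p = {l. 0 \<le> l \<and> enat (nat l) < L0 p}"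

definition rdd :: "(int \<Rightarrow> complex) \<Rightarrow> (int \<Rightarrow> int \<Rightarrow> complex) \<Rightarrow> int \<Rightarrow> complex" where
  "rdd q p l = (if l \<in> LL p then r_seq q p l / p l 0 else 0)"

definition pdd :: "(int \<Rightarrow> int \<Rightarrow> complex) \<Rightarrow> int \<Rightarrow> int \<Rightarrow> complex" where
  "pdd p l z = (if l \<in> LL p then (if z = 0 then 1 else 0) - p l z / p l 0 else 0)"

definition q_restr :: "(int \<Rightarrow> complex) \<Rightarrow> (int \<Rightarrow> int \<Rightarrow> complex) \<Rightarrow> int \<Rightarrow> complex" where
  "q_restr q p l = (if l \<in> LL p then q l else 0)"

primrec conv_pow :: "(int \<Rightarrow> int \<Rightarrow> complex) \<Rightarrow> nat \<Rightarrow> int \<Rightarrow> int \<Rightarrow> complex" where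
  "conv_pow a 0 l z = (if z = 0 then 1 else 0)"
| "conv_pow a (Suc j) l z = Sum_any (\<lambda>z1. a l z1 * conv_pow a j (l - z1) (z - z1))"

definition beta :: "(int \<Rightarrow> int \<Rightarrow> complex) \<Rightarrow> int \<Rightarrow> int \<Rightarrow> complex" where
  "beta a l z = (\<Sum>j\<in>{j::nat. int j \<le> z}. conv_pow a j l z)"

end

theory Submission
  imports Defs
begin

text \<open>Both sides of the identity solve the renewal equation
  \<open>f l = rdd l + (\<Sum>z\<in>{1..l}. pdd l z * f (l - z))\<close>, which determines \<open>f\<close> by strong
  induction on \<open>l\<close>. For \<open>q_restr\<close> this is the defining relation of \<open>r\<close> divided by \<open>p l 0\<close>;
  for the right-hand side it follows from the resolvent identity
  \<open>\<beta>{a} = \<delta> + a * \<beta>{a}\<close>, valid for every kernel \<open>a\<close> supported in \<open>z \<ge> 1\<close>.\<close>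

lemma LL_nonneg: "l \<in> LL p \<Longrightarrow> 0 \<le> l"
  by (auto simp: LL_def)

lemma LL_downward_closed:
  assumes "l \<in> LL p" "0 \<le> l'" "l' \<le> l"
  shows "l' \<in> LL p"
proof -
  have "enat (nat l') \<le> enat (nat l)" using assms by auto
  also have "enat (nat l) < L0 p" using assms by (auto simp: LL_def)
  finally show ?thesis using assms by (auto simp: LL_def)
qed

lemma p_zero_nonzero_on_LL:
  assumes "l \<in> LL p"
  shows "p l 0 \<noteq> 0"
proof -
  have "enat (nat l) < L0 p" "0 \<le> l" using assms by (auto simp: LL_def)
  then obtain L where "enat (nat l) < enat L" and "\<forall>l. 0 \<le> l \<and> l < int L \<longrightarrow> p l 0 \<noteq> 0"
    unfolding L0_def by (auto simp: less_Sup_iff)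
  with \<open>0 \<le> l\<close> show ?thesis by auto
qed

lemma rdd_nonzero_imp_nonneg: "rdd q p l \<noteq> 0 \<Longrightarrow> 0 \<le> l"
  by (auto simp: rdd_def LL_def split: if_splits)

lemma pdd_nonzero_imp_pos:
  assumes p_neg: "\<And>l z. z < 0 \<Longrightarrow> p l z = 0" and "pdd p l z \<noteq> 0"
  shows "1 \<le> z"
proof -
  have "l \<in> LL p" using assms(2) by (auto simp: pdd_def split: if_splits)
  then have "z \<noteq> 0" "p l z \<noteq> 0"
    using assms(2) p_zero_nonzero_on_LL by (auto simp: pdd_def split: if_splits)
  then show ?thesis using p_neg[of z l] by linarith
qed

lemma Sum_any_nonzero_imp_ex:
  fixes g :: "'a \<Rightarrow> 'b::comm_monoid_add"
  assumes "Sum_any g \<noteq> 0"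
  shows "\<exists>x. g x \<noteq> 0"
proof (rule ccontr)
  assume "\<nexists>x. g x \<noteq> 0"
  then have "g = (\<lambda>_. 0)" by auto
  with assms show False by simp
qed

lemma conv_pow_nonzero_imp_le:
  assumes a_pos: "\<And>l z. a l z \<noteq> 0 \<Longrightarrow> 1 \<le> z"
  shows "conv_pow a j l z \<noteq> 0 \<Longrightarrow> int j \<le> z"
proof (induction j arbitrary: l z)
  case 0
  then show ?case by (auto split: if_splits)
next
  case (Suc j)
  then obtain z1 where "a l z1 \<noteq> 0" "conv_pow a j (l - z1) (z - z1) \<noteq> 0"
    using Sum_any_nonzero_imp_ex[of "\<lambda>z1. a l z1 * conv_pow a j (l - z1) (z - z1)"] by auto
  then have "1 \<le> z1" "int j \<le> z - z1" using a_pos Suc.IH by blast+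
  then show ?case by simp
qed

lemma conv_pow_Suc_eq_sum:
  assumes a_pos: "\<And>l z. a l z \<noteq> 0 \<Longrightarrow> 1 \<le> z"
  shows "conv_pow a (Suc j) l z = (\<Sum>z1\<in>{1..z}. a l z1 * conv_pow a j (l - z1) (z - z1))"
  unfolding conv_pow.simps
proof (rule Sum_any.expand_superset)
  show "{z1. a l z1 * conv_pow a j (l - z1) (z - z1) \<noteq> 0} \<subseteq> {1..z}"
    using a_pos conv_pow_nonzero_imp_le[OF a_pos] by fastforce
qed simp

lemma beta_eq_0_if_neg: "z < 0 \<Longrightarrow> beta a l z = 0"
  by (simp add: beta_def)

lemma beta_eq_sum_atMost:
  assumes a_pos: "\<And>l z. a l z \<noteq> 0 \<Longrightarrow> 1 \<le> z" and "z \<le> int n"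
  shows "beta a l z = (\<Sum>j\<le>n. conv_pow a j l z)"
  unfolding beta_def
proof (rule sum.mono_neutral_left)
  show "{j. int j \<le> z} \<subseteq> {..n}" using assms(2) by auto
  show "\<forall>j\<in>{..n} - {j. int j \<le> z}. conv_pow a j l z = 0"
    using conv_pow_nonzero_imp_le[OF a_pos] by force
qed auto

lemma beta_resolvent:
  assumes a_pos: "\<And>l z. a l z \<noteq> 0 \<Longrightarrow> 1 \<le> z"
  shows "beta a l z = (if z = 0 then 1 else 0) + (\<Sum>z1\<in>{1..z}. a l z1 * beta a (l - z1) (z - z1))"
proof (cases "z < 0")
  case True
  then show ?thesis by (simp add: beta_eq_0_if_neg)
next
  case False
  define n where "n = nat z"
  have "beta a l z = (\<Sum>j\<le>Suc n. conv_pow a j l z)"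
    using False by (intro beta_eq_sum_atMost a_pos) (auto simp: n_def)
  also have "\<dots> = conv_pow a 0 l z + (\<Sum>j\<le>n. conv_pow a (Suc j) l z)"
    by (rule sum.atMost_Suc_shift)
  also have "(\<Sum>j\<le>n. conv_pow a (Suc j) l z)
      = (\<Sum>z1\<in>{1..z}. a l z1 * (\<Sum>j\<le>n. conv_pow a j (l - z1) (z - z1)))"
    by (simp only: conv_pow_Suc_eq_sum[OF a_pos] sum_distrib_left) (rule sum.swap)
  also have "\<dots> = (\<Sum>z1\<in>{1..z}. a l z1 * beta a (l - z1) (z - z1))"
    using False by (intro sum.cong refl arg_cong2[where f = "(*)"] beta_eq_sum_atMost[symmetric] a_pos)
      (auto simp: n_def)
  finally show ?thesis by (simp only: conv_pow.simps(1))
qed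

lemma renewal_solution_unique:
  fixes g h :: "int \<Rightarrow> 'a::semiring_0"
  assumes g: "\<And>l. g l = f l + (\<Sum>z1\<in>{1..l}. a l z1 * g (l - z1))"
    and h: "\<And>l. h l = f l + (\<Sum>z1\<in>{1..l}. a l z1 * h (l - z1))"
  shows "g l = h l"
proof (induction "nat l" arbitrary: l rule: less_induct)
  case less
  have "(\<Sum>z1\<in>{1..l}. a l z1 * g (l - z1)) = (\<Sum>z1\<in>{1..l}. a l z1 * h (l - z1))"
    by (intro sum.cong refl arg_cong2[where f = "(*)"] less) auto
  then show ?case by (simp only: g[of l] h[of l])
qed

definition beta_conv :: "(int \<Rightarrow> complex) \<Rightarrow> (int \<Rightarrow> int \<Rightarrow> complex) \<Rightarrow> int \<Rightarrow> complex" where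
  "beta_conv f a l = Sum_any (\<lambda>z. f (l - z) * beta a l z)"

lemma beta_conv_eq_sum:
  assumes f_nonneg: "\<And>l. f l \<noteq> 0 \<Longrightarrow> 0 \<le> l" and "finite A" "{0..l} \<subseteq> A"
  shows "beta_conv f a l = (\<Sum>z\<in>A. f (l - z) * beta a l z)"
  unfolding beta_conv_def
proof (rule Sum_any.expand_superset[OF \<open>finite A\<close>])
  show "{z. f (l - z) * beta a l z \<noteq> 0} \<subseteq> A"
  proof clarify
    fix z assume "f (l - z) * beta a l z \<noteq> 0"
    then have "0 \<le> l - z" "\<not> z < 0" using f_nonneg[of "l - z"] beta_eq_0_if_neg[of z a l] by auto
    then show "z \<in> A" using \<open>{0..l} \<subseteq> A\<close> by auto
  qed
qed

lemma beta_conv_shift: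
  assumes f_nonneg: "\<And>l. f l \<noteq> 0 \<Longrightarrow> 0 \<le> l" and "0 \<le> z1"
  shows "(\<Sum>z\<in>{0..l}. f (l - z) * beta a (l - z1) (z - z1)) = beta_conv f a (l - z1)"
proof -
  have "(\<Sum>z\<in>{0..l}. f (l - z) * beta a (l - z1) (z - z1))
      = (\<Sum>w\<in>{-z1..l - z1}. f (l - z1 - w) * beta a (l - z1) w)"
    by (rule sum.reindex_bij_witness[of _ "\<lambda>w. w + z1" "\<lambda>z. z - z1"]) auto
  also have "\<dots> = beta_conv f a (l - z1)"
    using \<open>0 \<le> z1\<close> by (intro beta_conv_eq_sum[symmetric] f_nonneg) auto
  finally show ?thesis .
qed

lemma beta_conv_renewal:
  assumes a_pos: "\<And>l z. a l z \<noteq> 0 \<Longrightarrow> 1 \<le> z" and f_nonneg: "\<And>l. f l \<noteq> 0 \<Longrightarrow> 0 \<le> l"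
  shows "beta_conv f a l = f l + (\<Sum>z1\<in>{1..l}. a l z1 * beta_conv f a (l - z1))"
proof -
  have resolvent: "beta a l z = (if z = 0 then 1 else 0) + (\<Sum>z1\<in>{1..l}. a l z1 * beta a (l - z1) (z - z1))"
    if "z \<in> {0..l}" for z
  proof -
    have "(\<Sum>z1\<in>{1..z}. a l z1 * beta a (l - z1) (z - z1)) = (\<Sum>z1\<in>{1..l}. a l z1 * beta a (l - z1) (z - z1))"
      using that by (intro sum.mono_neutral_left) (auto simp: beta_eq_0_if_neg)
    then show ?thesis using beta_resolvent[OF a_pos, where l = l and z = z] by simp
  qed
  have "beta_conv f a l = (\<Sum>z\<in>{0..l}. f (l - z) * beta a l z)"
    by (intro beta_conv_eq_sum f_nonneg) auto
  also have "\<dots> = (\<Sum>z\<in>{0..l}. f (l - z) * (if z = 0 then 1 else 0)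
      + (\<Sum>z1\<in>{1..l}. a l z1 * (f (l - z) * beta a (l - z1) (z - z1))))"
    by (intro sum.cong refl) (simp add: resolvent distrib_left sum_distrib_left mult.left_commute)
  also have "\<dots> = (\<Sum>z\<in>{0..l}. f (l - z) * (if z = 0 then 1 else 0))
      + (\<Sum>z\<in>{0..l}. \<Sum>z1\<in>{1..l}. a l z1 * (f (l - z) * beta a (l - z1) (z - z1)))"
    by (rule sum.distrib)
  also have "(\<Sum>z\<in>{0..l}. f (l - z) * (if z = 0 then 1 else 0)) = (\<Sum>z\<in>{0..l}. if z = 0 then f l else 0)"
    by (intro sum.cong) auto
  also have "\<dots> = f l"
    using f_nonneg[of l] by auto
  also have "(\<Sum>z\<in>{0..l}. \<Sum>z1\<in>{1..l}. a l z1 * (f (l - z) * beta a (l - z1) (z - z1)))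
      = (\<Sum>z1\<in>{1..l}. \<Sum>z\<in>{0..l}. a l z1 * (f (l - z) * beta a (l - z1) (z - z1)))"
    by (rule sum.swap)
  also have "\<dots> = (\<Sum>z1\<in>{1..l}. a l z1 * beta_conv f a (l - z1))"
    by (intro sum.cong refl) (simp add: sum_distrib_left[symmetric] beta_conv_shift[OF f_nonneg])
  finally show ?thesis .
qed

lemma r_seq_eq_sum:
  assumes q_neg: "\<And>l. l < 0 \<Longrightarrow> q l = 0" and p_neg: "\<And>l z. z < 0 \<Longrightarrow> p l z = 0"
    and "0 \<le> l"
  shows "r_seq q p l = q l * p l 0 + (\<Sum>z\<in>{1..l}. q (l - z) * p l z)"
proof -
  have "r_seq q p l = (\<Sum>z\<in>{0..l}. q (l - z) * p l z)"
    unfolding r_seq_def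
  proof (rule Sum_any.expand_superset)
    show "{z. q (l - z) * p l z \<noteq> 0} \<subseteq> {0..l}"
      using q_neg p_neg by (force simp: not_less[symmetric])
  qed simp
  also have "{0..l} = insert 0 {1..l}" using \<open>0 \<le> l\<close> by auto
  finally show ?thesis by simp
qed

lemma q_restr_renewal:
  assumes q_neg: "\<And>l. l < 0 \<Longrightarrow> q l = 0" and p_neg: "\<And>l z. z < 0 \<Longrightarrow> p l z = 0"
  shows "q_restr q p l = rdd q p l + (\<Sum>z1\<in>{1..l}. pdd p l z1 * q_restr q p (l - z1))"
proof (cases "l \<in> LL p")
  case False
  then show ?thesis by (simp add: q_restr_def rdd_def pdd_def)
next
  case l: True
  have "pdd p l z * q_restr q p (l - z) = - (q (l - z) * p l z) / p l 0" if "z \<in> {1..l}" for z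
  proof (cases "l - z \<in> LL p")
    case True
    then show ?thesis using that l by (simp add: pdd_def q_restr_def)
  next
    case False
    then have "l - z < 0" using LL_downward_closed[OF l, of "l - z"] that by fastforce
    then show ?thesis using False q_neg by (simp add: q_restr_def)
  qed
  then have "(\<Sum>z1\<in>{1..l}. pdd p l z1 * q_restr q p (l - z1)) = - (\<Sum>z\<in>{1..l}. q (l - z) * p l z) / p l 0"
    by (simp add: sum_divide_distrib sum_negf)
  then show ?thesis
    using l p_zero_nonzero_on_LL[OF l] r_seq_eq_sum[OF q_neg p_neg LL_nonneg[OF l]]
    by (simp add: q_restr_def rdd_def field_simps)
qed

theorem theorem1:
  fixes q :: "int \<Rightarrow> complex" and p :: "int \<Rightarrow> int \<Rightarrow> complex"
  assumes q_neg: "\<And>l. l < 0 \<Longrightarrow> q l = 0"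
    and p_neg: "\<And>l z. z < 0 \<Longrightarrow> p l z = 0"
    and L0_pos: "L0 p \<ge> 1"
  shows "(\<forall>l. q_restr q p l = Sum_any (\<lambda>z. rdd q p (l - z) * beta (pdd p) l z))
    \<and> ((\<forall>l. l \<notin> LL p \<longrightarrow> q l = 0) \<longrightarrow> (\<forall>l. q_restr q p l = q l))"
proof -
  have pdd_pos: "\<And>l z. pdd p l z \<noteq> 0 \<Longrightarrow> 1 \<le> z"
    using pdd_nonzero_imp_pos[where p = p, OF p_neg] by blast
  have "q_restr q p l = beta_conv (rdd q p) (pdd p) l" for l
    using q_restr_renewal[OF q_neg p_neg]
      beta_conv_renewal[OF pdd_pos rdd_nonzero_imp_nonneg]
    by (rule renewal_solution_unique)
  moreover have "(\<forall>l. l \<notin> LL p \<longrightarrow> q l = 0) \<longrightarrow> (\<forall>l. q_restr q p l = q l)"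
    by (simp add: q_restr_def)
  ultimately show ?thesis unfolding beta_conv_def by blast
qed

end
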